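(* Let $H$ be a graph with an optimal vector coloring $i\mapsto p_i$, and let $G$ be a graph with $H\subseteq G\subseteq H'(p)$ (all three graphs having vertex set $V(H)$). Then: (i) $i\mapsto p_i$ is an optimal vector coloring of $G$; in particular $\chi_v(H)=\chi_v(G)$. (ii) If $H$ is uniquely vector colorable, then $G$ is uniquely vector colorable, and $i\mapsto p_i$ is the unique optimal vector coloring of $G$ (up to equality of Gram matrices). Moreover, if $\langle p_i,p_j\rangle<-1/(\chi_v(G)-1)$ for some edge $i\sim_G j$, then the optimal vector coloring $i\mapsto p_i$ is not strict for $G$, and thus $\chi_v(G)<\chi_{sv}(G)$.
   Context: A vector $t$-coloring of a graph $G$ ($t\ge2$) is an assignment $i\mapsto p_i$ of unit vectors in some $\mathbb{R}^d$ to $V(G)$ with $\langle p_i,p_j\rangle\le -1/(t-1)$ whenever $i\sim j$; it is strict if equality holds for every edge. $\chi_v(G)$ (resp. $\chi_{sv}(G)$) is the smallest $t\ge 2$ for which a (resp. strict) vector $t$-coloring exists; a vector $\chi_v(G)$-coloring is optimal. $G$ is uniquely vector colorable if any two optimal vector colorings of $G$ have equal Gram matrices. For an optimal vector coloring $i\mapsto p_i$ of $H$, $H'(p)$ is the graph with vertex set $V(H)$ in which distinct $u,v$ are adjacent iff $\langle p_u,p_v\rangle\le -1/(\chi_v(H)-1)$. Subgraph inclusion $H\subseteq G$ means every edge of $H$ is an edge of $G$. *)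

theory Defs
  imports Complex_Main
begin

definition graph :: "'a set \<Rightarrow> ('a \<Rightarrow> 'a \<Rightarrow> bool) \<Rightarrow> bool" where
  "graph V E \<longleftrightarrow> finite V \<and> (\<forall>u v. E u v \<longrightarrow> u \<in> V \<and> v \<in> V \<and> u \<noteq> v \<and> E v u)"

text \<open>Vectors of R^d are represented by functions nat => real, of which only the
  first d coordinates are used; ip d is the standard inner product of R^d.\<close>
definition ip :: "nat \<Rightarrow> (nat \<Rightarrow> real) \<Rightarrow> (nat \<Rightarrow> real) \<Rightarrow> real" where
  "ip d x y = (\<Sum>k<d. x k * y k)"

definition vec_col :: "'a set \<Rightarrow> ('a \<Rightarrow> 'a \<Rightarrow> bool) \<Rightarrow> real \<Rightarrow> nat \<Rightarrow> ('a \<Rightarrow> nat \<Rightarrow> real) \<Rightarrow> bool" where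
  "vec_col V E t d p \<longleftrightarrow> t \<ge> 2 \<and> (\<forall>i\<in>V. ip d (p i) (p i) = 1) \<and>
     (\<forall>i j. E i j \<longrightarrow> ip d (p i) (p j) \<le> - 1 / (t - 1))"

definition strict_vec_col :: "'a set \<Rightarrow> ('a \<Rightarrow> 'a \<Rightarrow> bool) \<Rightarrow> real \<Rightarrow> nat \<Rightarrow> ('a \<Rightarrow> nat \<Rightarrow> real) \<Rightarrow> bool" where
  "strict_vec_col V E t d p \<longleftrightarrow> t \<ge> 2 \<and> (\<forall>i\<in>V. ip d (p i) (p i) = 1) \<and>
     (\<forall>i j. E i j \<longrightarrow> ip d (p i) (p j) = - 1 / (t - 1))"

definition chi_v :: "'a set \<Rightarrow> ('a \<Rightarrow> 'a \<Rightarrow> bool) \<Rightarrow> real" where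
  "chi_v V E = (LEAST t. \<exists>d p. vec_col V E t d p)"

definition chi_sv :: "'a set \<Rightarrow> ('a \<Rightarrow> 'a \<Rightarrow> bool) \<Rightarrow> real" where
  "chi_sv V E = (LEAST t. \<exists>d p. strict_vec_col V E t d p)"

definition optimal_vec_col :: "'a set \<Rightarrow> ('a \<Rightarrow> 'a \<Rightarrow> bool) \<Rightarrow> nat \<Rightarrow> ('a \<Rightarrow> nat \<Rightarrow> real) \<Rightarrow> bool" where
  "optimal_vec_col V E d p \<longleftrightarrow> vec_col V E (chi_v V E) d p"

definition same_gram :: "'a set \<Rightarrow> nat \<Rightarrow> ('a \<Rightarrow> nat \<Rightarrow> real) \<Rightarrow> nat \<Rightarrow> ('a \<Rightarrow> nat \<Rightarrow> real) \<Rightarrow> bool" where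
  "same_gram V d p d' q \<longleftrightarrow> (\<forall>i\<in>V. \<forall>j\<in>V. ip d (p i) (p j) = ip d' (q i) (q j))"

definition uniquely_vec_colorable :: "'a set \<Rightarrow> ('a \<Rightarrow> 'a \<Rightarrow> bool) \<Rightarrow> bool" where
  "uniquely_vec_colorable V E \<longleftrightarrow>
     (\<forall>d p d' q. optimal_vec_col V E d p \<and> optimal_vec_col V E d' q \<longrightarrow> same_gram V d p d' q)"

definition H_prime :: "'a set \<Rightarrow> ('a \<Rightarrow> 'a \<Rightarrow> bool) \<Rightarrow> nat \<Rightarrow> ('a \<Rightarrow> nat \<Rightarrow> real) \<Rightarrow> 'a \<Rightarrow> 'a \<Rightarrow> bool" where
  "H_prime V E d p u v \<longleftrightarrow> u \<in> V \<and> v \<in> V \<and> u \<noteq> v \<and> ip d (p u) (p v) \<le> - 1 / (chi_v V E - 1)"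

end

theory Submission
  imports Defs "HOL-Analysis.Elementary_Metric_Spaces"
begin

text \<open>Both parts are monotonicity arguments once one knows that the infima defining
  chi_v and chi_sv are attained: every vector colouring of G is one of H, p colours G at the
  threshold chi_v(H) by the definition of H'(p), so optimal colourings of G are exactly the
  optimal colourings of H that colour G; a strict optimal colouring of G would then share the
  Gram matrix of p, which is slack on some edge.  Attainment is a compactness argument:
  Gram--Schmidt moves any colouring into dimension |V| without changing its Gram matrix, there
  the coordinates of unit vectors are bounded, and a convergent subsequence of colourings at
  thresholds converging to t yields a colouring at t.\<close>

lemma ip_commute: "ip d x y = ip d y x"
  unfolding ip_def by (simp add: mult.commute)

lemma ip_cong: "(\<And>c. c < d \<Longrightarrow> x c = x' c) \<Longrightarrow> ip d x y = ip d x' y"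
  unfolding ip_def by (rule sum.cong) auto

lemma ip_sum_right: "ip d x (\<lambda>c. \<Sum>k\<in>K. a k * y k c) = (\<Sum>k\<in>K. a k * ip d x (y k))"
  unfolding ip_def by (simp add: sum_distrib_left sum.swap[of _ K] mult.left_commute)

lemma ip_diff_right: "ip d x (\<lambda>c. y c - z c) = ip d x y - ip d x z"
  unfolding ip_def by (simp add: right_diff_distrib sum_subtractf)

lemma ip_divide_right: "ip d x (\<lambda>c. y c / s) = ip d x y / s"
  unfolding ip_def by (simp add: sum_divide_distrib)

lemma ip_divide_left: "ip d (\<lambda>c. x c / s) y = ip d x y / s"
  unfolding ip_def by (simp add: sum_divide_distrib)

lemma ip_self_nonneg: "0 \<le> ip d x x"
  unfolding ip_def by (simp add: sum_nonneg)

lemma ip_self_eq_0D: "ip d x x = 0 \<Longrightarrow> c < d \<Longrightarrow> x c = 0"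
  unfolding ip_def by (subst (asm) sum_nonneg_eq_0_iff) auto

lemma square_le_ip_self: "c < d \<Longrightarrow> x c * x c \<le> ip d x x"
  unfolding ip_def by (rule member_le_sum[where f = "\<lambda>k. x k * x k"]) auto

definition orthonormal :: "nat \<Rightarrow> nat \<Rightarrow> (nat \<Rightarrow> nat \<Rightarrow> real) \<Rightarrow> bool" where
  "orthonormal d m e \<longleftrightarrow> (\<forall>k<m. \<forall>l<m. ip d (e k) (e l) = (if k = l then 1 else 0))"

definition proj :: "nat \<Rightarrow> nat \<Rightarrow> (nat \<Rightarrow> nat \<Rightarrow> real) \<Rightarrow> (nat \<Rightarrow> real) \<Rightarrow> nat \<Rightarrow> real" where
  "proj d m e x = (\<lambda>c. \<Sum>k<m. ip d x (e k) * e k c)"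

definition spanned :: "nat \<Rightarrow> nat \<Rightarrow> (nat \<Rightarrow> nat \<Rightarrow> real) \<Rightarrow> (nat \<Rightarrow> real) \<Rightarrow> bool" where
  "spanned d m e x \<longleftrightarrow> (\<forall>c<d. x c = proj d m e x c)"

lemma ip_proj_right: "ip d y (proj d m e x) = (\<Sum>k<m. ip d x (e k) * ip d y (e k))"
  unfolding proj_def by (rule ip_sum_right)

lemma ip_basis_proj:
  assumes "orthonormal d m e" and "l < m"
  shows "ip d (e l) (proj d m e x) = ip d x (e l)"
proof -
  have "ip d (e l) (proj d m e x) = (\<Sum>k<m. if k = l then ip d x (e k) else 0)"
    unfolding ip_proj_right using assms ip_commute[of d "e l"]
    by (intro sum.cong) (auto simp: orthonormal_def)
  then show ?thesis using assms(2) by simp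
qed

lemma ip_basis_residual:
  assumes "orthonormal d m e" and "l < m"
  shows "ip d (e l) (\<lambda>c. x c - proj d m e x c) = 0"
  using ip_basis_proj[OF assms] by (simp add: ip_diff_right ip_commute)

lemma parseval_spanned:
  assumes "spanned d m e y"
  shows "ip d x y = (\<Sum>k<m. ip d y (e k) * ip d x (e k))"
proof -
  have "ip d x y = ip d x (proj d m e y)"
    using assms ip_cong[of d y "proj d m e y" x] by (simp add: spanned_def ip_commute)
  then show ?thesis by (simp add: ip_proj_right)
qed

lemma proj_Suc_upd: "proj d (Suc m) (e(m := u)) x = (\<lambda>c. proj d m e x c + ip d x u * u c)"
  unfolding proj_def by (auto intro!: ext sum.cong)

lemma orthonormal_Suc_upd:
  assumes "orthonormal d m e" and "\<And>k. k < m \<Longrightarrow> ip d (e k) u = 0" and "ip d u u = 1"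
  shows "orthonormal d (Suc m) (e(m := u))"
  unfolding orthonormal_def
proof (intro allI impI)
  fix k l assume "k < Suc m" "l < Suc m"
  then consider "k < m" "l < m" | "k < m" "l = m" | "k = m" "l < m" | "k = m" "l = m"
    by linarith
  then show "ip d ((e(m := u)) k) ((e(m := u)) l) = (if k = l then 1 else 0)"
    by cases (use assms ip_commute[of d u "e l"] in \<open>auto simp: orthonormal_def\<close>)
qed

lemma spanned_Suc_upd:
  assumes "spanned d m e y" and "\<And>k. k < m \<Longrightarrow> ip d (e k) u = 0"
  shows "spanned d (Suc m) (e(m := u)) y"
proof -
  have "ip d y u = 0"
    using parseval_spanned[OF assms(1), of u] assms(2) by (simp add: ip_commute)
  then show ?thesis using assms(1) by (simp add: spanned_def proj_Suc_upd)
qed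

text \<open>The Gram--Schmidt step: the normalised residual of x extends the orthonormal family.\<close>
lemma orthonormal_extend:
  assumes on: "orthonormal d m e"
  obtains m' e' where "m' \<le> Suc m" "orthonormal d m' e'" "spanned d m' e' x"
    "\<And>y. spanned d m e y \<Longrightarrow> spanned d m' e' y"
proof (cases "ip d (\<lambda>c. x c - proj d m e x c) (\<lambda>c. x c - proj d m e x c) = 0")
  case True
  then have "spanned d m e x" by (auto simp: spanned_def dest: ip_self_eq_0D)
  with on show ?thesis using that[of m e] by auto
next
  case False
  define r where "r = (\<lambda>c. x c - proj d m e x c)"
  define s where "s = sqrt (ip d r r)"
  have s: "0 < s" "s * s = ip d r r"
    using False ip_self_nonneg[of d r] by (auto simp: s_def r_def)
  define u where "u = (\<lambda>c. r c / s)"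
  have perp: "ip d (e k) u = 0" if "k < m" for k
    using ip_basis_residual[OF on that] by (simp add: u_def r_def ip_divide_right)
  have "ip d r (e k) = 0" if "k < m" for k
    using ip_basis_residual[OF on that] ip_commute[of d r "e k"] by (simp add: r_def)
  then have "ip d r (proj d m e x) = 0" by (simp add: ip_proj_right)
  moreover have "ip d r r = ip d r x - ip d r (proj d m e x)"
    by (simp only: r_def ip_diff_right)
  ultimately have xr: "ip d x r = s * s" using s(2) ip_commute[of d x r] by simp
  have "ip d u u = ip d r r / (s * s)" by (simp add: u_def ip_divide_left ip_divide_right)
  then have "ip d u u = 1" using s(1) by (simp add: s(2)[symmetric])
  then have "orthonormal d (Suc m) (e(m := u))"
    using orthonormal_Suc_upd[OF on, of u] perp by blast
  moreover have "spanned d (Suc m) (e(m := u)) x"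
    using xr s(1) by (simp add: spanned_def proj_Suc_upd u_def ip_divide_right r_def)
  ultimately show ?thesis using that spanned_Suc_upd perp by blast
qed

lemma gram_schmidt:
  assumes "finite W"
  shows "\<exists>m e. m \<le> card W \<and> orthonormal d m e \<and> (\<forall>j\<in>W. spanned d m e (p j))"
  using assms
proof (induction W rule: finite_induct)
  case empty
  show ?case by (intro exI[of _ 0]) (simp add: orthonormal_def)
next
  case (insert a W)
  then obtain m e where m: "m \<le> card W" and on: "orthonormal d m e"
    and W: "\<forall>j\<in>W. spanned d m e (p j)"
    by blast
  obtain m' e' where "m' \<le> Suc m" "orthonormal d m' e'" "spanned d m' e' (p a)"
    and "\<And>y. spanned d m e y \<Longrightarrow> spanned d m' e' y"
    using orthonormal_extend[OF on, of "p a"] by blast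
  moreover have "Suc m \<le> card (insert a W)" using m insert(1,2) by simp
  ultimately show ?case using W by (intro exI[of _ m'] exI[of _ e']) auto
qed

lemma gram_in_card_dim:
  assumes "finite V"
  shows "\<exists>q. \<forall>i\<in>V. \<forall>j\<in>V. ip (card V) (q i) (q j) = ip d (p i) (p j)"
proof -
  obtain m e where m: "m \<le> card V" and "orthonormal d m e" and sp: "\<forall>j\<in>V. spanned d m e (p j)"
    using gram_schmidt[OF assms] by blast
  define q where "q j k = (if k < m then ip d (p j) (e k) else 0)" for j k
  have "ip (card V) (q i) (q j) = ip d (p i) (p j)" if "i \<in> V" "j \<in> V" for i j
  proof -
    have "{..<card V} \<inter> {k. k < m} = {..<m}" using m by auto
    then have "ip (card V) (q i) (q j) = (\<Sum>k<m. ip d (p i) (e k) * ip d (p j) (e k))"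
      unfolding ip_def q_def by (simp add: if_distrib[of "\<lambda>x. _ * x"] sum.If_cases)
    also have "\<dots> = ip d (p i) (p j)"
      using parseval_spanned[of d m e "p j" "p i"] sp that by (simp add: mult.commute)
    finally show ?thesis .
  qed
  then show ?thesis by blast
qed

lemma Bseq_family_convergent_subseq:
  fixes x :: "'i \<Rightarrow> nat \<Rightarrow> real"
  assumes "finite I" and "\<forall>i\<in>I. Bseq (x i)"
  shows "\<exists>r. strict_mono r \<and> (\<forall>i\<in>I. convergent (\<lambda>k. x i (r k)))"
  using assms
proof (induction I rule: finite_induct)
  case empty
  show ?case by (intro exI[of _ id]) (simp add: strict_mono_def)
next
  case (insert a I)
  then obtain r where r: "strict_mono r" "\<forall>i\<in>I. convergent (\<lambda>k. x i (r k))" by auto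
  obtain f where f: "strict_mono f" "monoseq (\<lambda>k. x a (r (f k)))"
    using seq_monosub[of "\<lambda>k. x a (r k)"] by auto
  have "Bseq (\<lambda>k. x a (r (f k)))"
    using insert.prems Bseq_subseq[of "x a" "r \<circ> f"] by (simp add: o_def)
  then have "convergent (\<lambda>k. x a (r (f k)))" using f(2) Bseq_monoseq_convergent by blast
  moreover have "convergent (\<lambda>k. x i (r (f k)))" if "i \<in> I" for i
    using convergent_subseq_convergent[OF r(2)[rule_format, OF that] f(1)] by (simp add: o_def)
  ultimately show ?case
    using strict_mono_o[OF r(1) f(1)] by (intro exI[of _ "r \<circ> f"]) (auto simp: o_def)
qed

text \<open>Bolzano--Weierstrass for Gram matrices: after moving each family into dimension card V,
  all coordinates of unit vectors lie in [-1, 1].\<close>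
lemma unit_gram_convergent_subseq:
  fixes P :: "nat \<Rightarrow> 'a \<Rightarrow> nat \<Rightarrow> real"
  assumes fin: "finite V" and unit: "\<And>k i. i \<in> V \<Longrightarrow> ip (D k) (P k i) (P k i) = 1"
  shows "\<exists>r q. strict_mono r \<and> (\<forall>i\<in>V. \<forall>j\<in>V.
      (\<lambda>k. ip (D (r k)) (P (r k) i) (P (r k) j)) \<longlonglongrightarrow> ip (card V) (q i) (q j))"
proof -
  define N where "N = card V"
  have "\<forall>k. \<exists>q. \<forall>i\<in>V. \<forall>j\<in>V. ip N (q i) (q j) = ip (D k) (P k i) (P k j)"
    using gram_in_card_dim[OF fin] by (simp add: N_def)
  then obtain Q where Q: "\<forall>k. \<forall>i\<in>V. \<forall>j\<in>V. ip N (Q k i) (Q k j) = ip (D k) (P k i) (P k j)"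
    unfolding choice_iff by blast
  have "\<bar>Q k i c\<bar> \<le> 1" if "i \<in> V" "c < N" for k i c
  proof -
    have "Q k i c * Q k i c \<le> 1"
      using square_le_ip_self[OF that(2), of "Q k i"] Q unit[of i k] that(1) by simp
    then show ?thesis by (metis abs_square_le_1 power2_eq_square)
  qed
  then have "\<forall>ic\<in>V \<times> {..<N}. Bseq (\<lambda>k. Q k (fst ic) (snd ic))"
    by (intro ballI BseqI'[where K = 1]) (simp add: mem_Times_iff)
  then obtain r where r: "strict_mono r"
    and conv: "\<forall>ic\<in>V \<times> {..<N}. convergent (\<lambda>k. Q (r k) (fst ic) (snd ic))"
    using Bseq_family_convergent_subseq[of "V \<times> {..<N}" "\<lambda>ic k. Q k (fst ic) (snd ic)"] fin
    by blast
  define q where "q i c = lim (\<lambda>k. Q (r k) i c)" for i c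
  have lim: "(\<lambda>k. Q (r k) i c) \<longlonglongrightarrow> q i c" if "i \<in> V" "c < N" for i c
    using conv that unfolding q_def by (auto simp: convergent_LIMSEQ_iff)
  have "(\<lambda>k. ip (D (r k)) (P (r k) i) (P (r k) j)) \<longlonglongrightarrow> ip N (q i) (q j)"
    if "i \<in> V" "j \<in> V" for i j
  proof -
    have "(\<lambda>k. ip N (Q (r k) i) (Q (r k) j)) \<longlonglongrightarrow> ip N (q i) (q j)"
      unfolding ip_def by (intro tendsto_sum tendsto_mult lim that) auto
    then show ?thesis using Q that by simp
  qed
  then show ?thesis using r unfolding N_def by blast
qed

text \<open>Vector colourings and strict vector colourings differ only in the relation R demanded
  between the inner product along an edge and the threshold; both relations are closed.\<close>
definition vec_col_rel :: "(real \<Rightarrow> real \<Rightarrow> bool) \<Rightarrow> 'a set \<Rightarrow> ('a \<Rightarrow> 'a \<Rightarrow> bool) \<Rightarrow> real \<Rightarrow> nat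
    \<Rightarrow> ('a \<Rightarrow> nat \<Rightarrow> real) \<Rightarrow> bool" where
  "vec_col_rel R V E t d p \<longleftrightarrow> t \<ge> 2 \<and> (\<forall>i\<in>V. ip d (p i) (p i) = 1) \<and>
     (\<forall>i j. E i j \<longrightarrow> R (ip d (p i) (p j)) (- 1 / (t - 1)))"

lemma vec_col_eq_vec_col_rel: "vec_col = vec_col_rel (\<le>)"
  by (intro ext) (simp add: vec_col_def vec_col_rel_def)

lemma strict_vec_col_eq_vec_col_rel: "strict_vec_col = vec_col_rel (=)"
  by (intro ext) (simp add: strict_vec_col_def vec_col_rel_def)

lemma closed_vec_col_rel_thresholds:
  assumes g: "graph V E"
    and R: "closed {(a, b). R a b}"
  shows "closed {t. \<exists>d p. vec_col_rel R V E t d p}"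
  unfolding closed_sequential_limits
proof (intro allI impI, elim conjE)
  fix T x assume "\<forall>k. T k \<in> {t. \<exists>d p. vec_col_rel R V E t d p}" and T: "T \<longlonglongrightarrow> x"
  then obtain D P where DP: "\<And>k. vec_col_rel R V E (T k) (D k) (P k)"
    by (simp add: mem_Collect_eq) metis
  have fin: "finite V" using g by (simp add: graph_def)
  have unit: "\<And>k i. i \<in> V \<Longrightarrow> ip (D k) (P k i) (P k i) = 1"
    using DP by (simp add: vec_col_rel_def)
  obtain r q where r: "strict_mono r" and lim: "\<And>i j. i \<in> V \<Longrightarrow> j \<in> V \<Longrightarrow>
      (\<lambda>k. ip (D (r k)) (P (r k) i) (P (r k) j)) \<longlonglongrightarrow> ip (card V) (q i) (q j)"
    using unit_gram_convergent_subseq[of V D P, OF fin unit] by blast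
  have Tr: "(\<lambda>k. T (r k)) \<longlonglongrightarrow> x" using LIMSEQ_subseq_LIMSEQ[OF T r] by (simp add: o_def)
  have x2: "2 \<le> x" using DP by (intro LIMSEQ_le_const[OF T]) (auto simp: vec_col_rel_def)
  have "vec_col_rel R V E x (card V) q"
    unfolding vec_col_rel_def
  proof (intro conjI ballI allI impI)
    fix i assume i: "i \<in> V"
    show "ip (card V) (q i) (q i) = 1"
      using lim[OF i i] DP i by (auto simp: vec_col_rel_def intro: LIMSEQ_unique)
  next
    fix i j assume e: "E i j"
    have "(\<lambda>k. - 1 / (T (r k) - 1)) \<longlonglongrightarrow> - 1 / (x - 1)"
      using x2 by (intro tendsto_intros Tr) auto
    then have conv: "(\<lambda>k. (ip (D (r k)) (P (r k) i) (P (r k) j), - 1 / (T (r k) - 1)))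
        \<longlonglongrightarrow> (ip (card V) (q i) (q j), - 1 / (x - 1))"
      using e g by (intro tendsto_Pair lim) (auto simp: graph_def)
    have "\<And>k. (ip (D (r k)) (P (r k) i) (P (r k) j), - 1 / (T (r k) - 1)) \<in> {(a, b). R a b}"
      using DP e by (simp add: vec_col_rel_def)
    then have "(ip (card V) (q i) (q j), - 1 / (x - 1)) \<in> {(a, b). R a b}"
      by (rule closed_sequentially[OF R _ conv])
    then show "R (ip (card V) (q i) (q j)) (- 1 / (x - 1))" by simp
  qed (rule x2)
  then show "x \<in> {t. \<exists>d p. vec_col_rel R V E t d p}" by blast
qed

lemma Least_eq_Inf_closed:
  fixes S :: "real set"
  assumes "closed S" and "bdd_below S" and "S \<noteq> {}"
  shows "(LEAST t. t \<in> S) = Inf S"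
  using assms by (intro Least_equality closed_contains_Inf cInf_lower)

lemma Least_vec_col_rel:
  assumes "graph V E"
    and R: "closed {(a, b). R a b}"
    and "vec_col_rel R V E t d p"
  shows "\<exists>d q. vec_col_rel R V E (LEAST t. \<exists>d p. vec_col_rel R V E t d p) d q"
    and "(LEAST t. \<exists>d p. vec_col_rel R V E t d p) \<le> t"
proof -
  define S where "S = {t. \<exists>d p. vec_col_rel R V E t d p}"
  have "closed S" unfolding S_def using closed_vec_col_rel_thresholds[OF assms(1) R] by blast
  moreover have "bdd_below S" by (rule bdd_belowI[of _ 2]) (auto simp: S_def vec_col_rel_def)
  moreover have "t \<in> S" using assms(3) by (auto simp: S_def)
  ultimately have "(LEAST t. t \<in> S) = Inf S" "Inf S \<in> S" "Inf S \<le> t"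
    using Least_eq_Inf_closed closed_contains_Inf cInf_lower by blast+
  then show "\<exists>d q. vec_col_rel R V E (LEAST t. \<exists>d p. vec_col_rel R V E t d p) d q"
    and "(LEAST t. \<exists>d p. vec_col_rel R V E t d p) \<le> t"
    by (simp_all add: S_def)
qed

lemma closed_le_rel: "closed {(a :: real, b). a \<le> b}"
  unfolding case_prod_beta'
  by (intro closed_Collect_le continuous_on_fst continuous_on_snd continuous_on_id)

lemma closed_eq_rel: "closed {(a :: real, b). a = b}"
  unfolding case_prod_beta'
  by (intro closed_Collect_eq continuous_on_fst continuous_on_snd continuous_on_id)

lemma chi_v_le:
  assumes "graph V E" and "vec_col V E t d p"
  shows "chi_v V E \<le> t"
  using Least_vec_col_rel(2)[OF assms(1) closed_le_rel assms(2)[unfolded vec_col_eq_vec_col_rel]]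
  by (simp add: chi_v_def vec_col_eq_vec_col_rel)

lemma optimal_vec_col_exists:
  assumes "graph V E" and "vec_col V E t d p"
  shows "\<exists>d q. optimal_vec_col V E d q"
  using Least_vec_col_rel(1)[OF assms(1) closed_le_rel assms(2)[unfolded vec_col_eq_vec_col_rel]]
  by (simp add: optimal_vec_col_def chi_v_def vec_col_eq_vec_col_rel)

lemma ip_two_valued:
  fixes A B :: real
  assumes "a < n" and "b < n"
  shows "ip n (\<lambda>c. if c = a then A else B) (\<lambda>c. if c = b then A else B) =
    (if a = b then A * A + (real n - 1) * (B * B) else 2 * (A * B) + (real n - 2) * (B * B))"
proof -
  have "ip n (\<lambda>c. if c = a then A else B) (\<lambda>c. if c = b then A else B) =
      (\<Sum>c<n. B * B + (if c = a then A * B - B * B else 0) + (if c = b then A * B - B * B else 0)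
        + (if c = a then if a = b then A * A - 2 * (A * B) + B * B else 0 else 0))"
    unfolding ip_def by (intro sum.cong) (auto simp: algebra_simps)
  also have "\<dots> = real n * (B * B) + 2 * (A * B - B * B) +
      (if a = b then A * A - 2 * (A * B) + B * B else 0)"
    using assms by (simp add: sum.distrib)
  finally have ip: "ip n (\<lambda>c. if c = a then A else B) (\<lambda>c. if c = b then A else B) =
      real n * (B * B) + 2 * (A * B - B * B) + (if a = b then A * A - 2 * (A * B) + B * B else 0)" .
  show ?thesis unfolding ip by (simp add: algebra_simps)
qed

text \<open>The centred basis vector e_a - (1/n) (e_0 + ... + e_(n-1)) of R^n, rescaled to norm 1:
  the n vertices of a regular simplex.\<close>
definition simplex_vertex :: "nat \<Rightarrow> nat \<Rightarrow> nat \<Rightarrow> real" where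
  "simplex_vertex n a = (\<lambda>c. if c = a then (real n - 1) / sqrt (real n * (real n - 1))
     else - 1 / sqrt (real n * (real n - 1)))"

lemma ip_simplex_vertex:
  assumes "2 \<le> n" and "a < n" and "b < n"
  shows "ip n (simplex_vertex n a) (simplex_vertex n b) = (if a = b then 1 else - 1 / (real n - 1))"
proof -
  define x where "x = real n"
  define u where "u = sqrt (x * (x - 1))"
  have x: "2 \<le> x" using assms(1) by (simp add: x_def)
  then have u: "u * u = x * (x - 1)" "u \<noteq> 0" by (auto simp: u_def)
  have "((x - 1) / u) * ((x - 1) / u) + (x - 1) * ((- 1 / u) * (- 1 / u)) = x * (x - 1) / (u * u)"
    using u(2) by (simp add: field_simps)
  then have same: "((x - 1) / u) * ((x - 1) / u) + (x - 1) * ((- 1 / u) * (- 1 / u)) = 1"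
    using u x by simp
  have "2 * ((x - 1) / u * (- 1 / u)) + (x - 2) * ((- 1 / u) * (- 1 / u)) = - x / (u * u)"
    using u(2) by (simp add: field_simps)
  also have "\<dots> = - 1 / (x - 1)"
    using u x by (simp add: field_simps)
  finally have distinct:
    "2 * ((x - 1) / u * (- 1 / u)) + (x - 2) * ((- 1 / u) * (- 1 / u)) = - 1 / (x - 1)" .
  have "simplex_vertex n = (\<lambda>a c. if c = a then (x - 1) / u else - 1 / u)"
    by (intro ext) (simp add: simplex_vertex_def x_def u_def)
  then show ?thesis
    using ip_two_valued[OF assms(2,3), of "(x - 1) / u" "- 1 / u"] same distinct
    by (simp add: x_def)
qed

lemma strict_vec_col_exists:
  assumes "graph V E"
  shows "\<exists>t d p. strict_vec_col V E t d p"
proof -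
  define n where "n = card V + 2"
  obtain f where f: "bij_betw f V {0..<card V}"
    using ex_bij_betw_finite_nat[of V] assms by (auto simp: graph_def)
  then have f_less: "f i < n" if "i \<in> V" for i
    using bij_betwE[OF f] that by (fastforce simp: n_def)
  have f_inj: "f i \<noteq> f j" if "i \<in> V" "j \<in> V" "i \<noteq> j" for i j
    using f that by (auto simp: bij_betw_def inj_on_def)
  have n: "2 \<le> n" by (simp add: n_def)
  have "strict_vec_col V E (real n) n (\<lambda>i. simplex_vertex n (f i))"
    unfolding strict_vec_col_def
  proof (intro conjI ballI allI impI)
    show "2 \<le> real n" using n by simp
    show "ip n (simplex_vertex n (f i)) (simplex_vertex n (f i)) = 1" if "i \<in> V" for i
      using ip_simplex_vertex[OF n f_less f_less] that by simp
    show "ip n (simplex_vertex n (f i)) (simplex_vertex n (f j)) = - 1 / (real n - 1)"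
      if "E i j" for i j
      using that assms ip_simplex_vertex[OF n f_less f_less, of i j] f_inj[of i j]
      by (auto simp: graph_def)
  qed
  then show ?thesis by blast
qed

lemma strict_vec_col_chi_sv_exists:
  assumes "graph V E"
  shows "\<exists>d q. strict_vec_col V E (chi_sv V E) d q"
  using strict_vec_col_exists[OF assms] Least_vec_col_rel(1)[OF assms closed_eq_rel]
  by (auto simp: chi_sv_def strict_vec_col_eq_vec_col_rel)

lemma vec_col_subgraph:
  assumes "\<And>u v. E u v \<Longrightarrow> F u v" and "vec_col V F t d p"
  shows "vec_col V E t d p"
  using assms by (simp add: vec_col_def)

lemma vec_col_H_prime:
  assumes "optimal_vec_col V E d p" and "\<And>u v. F u v \<Longrightarrow> H_prime V E d p u v"
  shows "vec_col V F (chi_v V E) d p"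
  using assms by (simp add: optimal_vec_col_def vec_col_def H_prime_def)

lemma chi_v_supergraph_eq:
  assumes "graph V E" and "graph V F" and "\<And>u v. E u v \<Longrightarrow> F u v"
    and "vec_col V F (chi_v V E) d p"
  shows "chi_v V F = chi_v V E"
proof (rule antisym)
  show "chi_v V F \<le> chi_v V E" using chi_v_le[OF assms(2,4)] .
  obtain d' q where "optimal_vec_col V F d' q" using optimal_vec_col_exists[OF assms(2,4)] by blast
  then have "vec_col V E (chi_v V F) d' q"
    using assms(3) vec_col_subgraph unfolding optimal_vec_col_def by blast
  then show "chi_v V E \<le> chi_v V F" using chi_v_le[OF assms(1)] by blast
qed

lemma chi_v_less_chi_sv:
  assumes g: "graph V E" and "uniquely_vec_colorable V E" and p: "optimal_vec_col V E d p"
    and "E i j" and slack: "ip d (p i) (p j) < - 1 / (chi_v V E - 1)"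
  shows "chi_v V E < chi_sv V E"
proof -
  obtain d' q where q: "strict_vec_col V E (chi_sv V E) d' q"
    using strict_vec_col_chi_sv_exists[OF g] by blast
  then have "vec_col V E (chi_sv V E) d' q" by (simp add: strict_vec_col_def vec_col_def)
  then have le: "chi_v V E \<le> chi_sv V E" by (rule chi_v_le[OF g])
  have "chi_sv V E \<noteq> chi_v V E"
  proof
    assume eq: "chi_sv V E = chi_v V E"
    then have "optimal_vec_col V E d' q"
      using q by (simp add: optimal_vec_col_def strict_vec_col_def vec_col_def)
    then have "same_gram V d p d' q"
      using assms(2,3) by (simp add: uniquely_vec_colorable_def)
    moreover have "i \<in> V" "j \<in> V" using \<open>E i j\<close> g by (auto simp: graph_def)
    ultimately have "ip d (p i) (p j) = ip d' (q i) (q j)" by (simp add: same_gram_def)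
    with q eq \<open>E i j\<close> slack show False by (simp add: strict_vec_col_def)
  qed
  with le show ?thesis by simp
qed

theorem theorem3p12:
  fixes V :: "'a set" and EH EG :: "'a \<Rightarrow> 'a \<Rightarrow> bool"
    and d :: nat and p :: "'a \<Rightarrow> nat \<Rightarrow> real"
  assumes "graph V EH" and "graph V EG"
    and "optimal_vec_col V EH d p"
    and "\<And>u v. EH u v \<Longrightarrow> EG u v"
    and "\<And>u v. EG u v \<Longrightarrow> H_prime V EH d p u v"
  shows "(optimal_vec_col V EG d p \<and> chi_v V EH = chi_v V EG)
       \<and> (uniquely_vec_colorable V EH \<longrightarrow>
            uniquely_vec_colorable V EG
          \<and> (\<forall>d' q. optimal_vec_col V EG d' q \<longrightarrow> same_gram V d p d' q)
          \<and> ((\<exists>i j. EG i j \<and> ip d (p i) (p j) < - 1 / (chi_v V EG - 1)) \<longrightarrow>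
               \<not> strict_vec_col V EG (chi_v V EG) d p \<and> chi_v V EG < chi_sv V EG))"
proof -
  have pG: "vec_col V EG (chi_v V EH) d p" using vec_col_H_prime[OF assms(3,5)] .
  have chi: "chi_v V EG = chi_v V EH" using chi_v_supergraph_eq[OF assms(1,2,4) pG] .
  have optH: "optimal_vec_col V EH d' q" if "optimal_vec_col V EG d' q" for d' q
    using that vec_col_subgraph[OF assms(4)] chi by (simp add: optimal_vec_col_def)
  have "uniquely_vec_colorable V EG
      \<and> (\<forall>d' q. optimal_vec_col V EG d' q \<longrightarrow> same_gram V d p d' q)"
    if "uniquely_vec_colorable V EH"
    using that optH assms(3) by (auto simp: uniquely_vec_colorable_def)
  moreover have "\<not> strict_vec_col V EG (chi_v V EG) d p \<and> chi_v V EG < chi_sv V EG"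
    if "uniquely_vec_colorable V EG" "EG i j" "ip d (p i) (p j) < - 1 / (chi_v V EG - 1)" for i j
    using that chi_v_less_chi_sv[OF assms(2) that(1) _ that(2,3)] pG chi
    by (auto simp: strict_vec_col_def optimal_vec_col_def)
  ultimately show ?thesis using pG chi by (auto simp: optimal_vec_col_def)
qed

end
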